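(* Let $2\le k\le n$ be integers and let $G$ be a graph on $n$ vertices. Then $bp(G)\le n-k$ if and only if $G$ has a special subgraph of order $k$.
   Context: $bp(G)$ is the minimum number of pairwise edge-disjoint complete bipartite subgraphs (bicliques) of $G$ covering every edge exactly once. A biclique is a star if one of its two parts has exactly one vertex; a non-star biclique is a complete bipartite graph $K_{a,b}$ with $a,b\ge 2$. An induced subgraph $H$ of $G$ is a special subgraph of order $k$ if for some integer $r\ge 0$, $H$ has exactly $k+r$ vertices and the edge set of $H$ can be partitioned into at most $r$ pairwise edge-disjoint non-star bicliques (in particular an independent set of size $k$ is a special subgraph of order $k$, with $r=0$). *)

theory Defs
  imports Main
begin

definition graph :: "'a set \<Rightarrow> 'a set set \<Rightarrow> bool" where
  "graph V E \<longleftrightarrow> finite V \<and> (\<forall>e\<in>E. e \<subseteq> V \<and> card e = 2)"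

definition biclique_edges :: "'a set \<Rightarrow> 'a set \<Rightarrow> 'a set set" where
  "biclique_edges A B = {{a, b} | a b. a \<in> A \<and> b \<in> B}"

definition is_biclique :: "'a set set \<Rightarrow> 'a set \<times> 'a set \<Rightarrow> bool" where
  "is_biclique E P \<longleftrightarrow> fst P \<noteq> {} \<and> snd P \<noteq> {} \<and> fst P \<inter> snd P = {}
      \<and> biclique_edges (fst P) (snd P) \<subseteq> E"

definition non_star :: "'a set \<times> 'a set \<Rightarrow> bool" where
  "non_star P \<longleftrightarrow> card (fst P) \<ge> 2 \<and> card (snd P) \<ge> 2"

definition biclique_partition :: "'a set set \<Rightarrow> ('a set \<times> 'a set) list \<Rightarrow> bool" where
  "biclique_partition E Ps \<longleftrightarrow>
     (\<forall>P\<in>set Ps. is_biclique E P)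
     \<and> (\<forall>i<length Ps. \<forall>j<length Ps. i \<noteq> j \<longrightarrow>
           biclique_edges (fst (Ps!i)) (snd (Ps!i)) \<inter> biclique_edges (fst (Ps!j)) (snd (Ps!j)) = {})
     \<and> (\<Union>P\<in>set Ps. biclique_edges (fst P) (snd P)) = E"

definition bp :: "'a set set \<Rightarrow> nat" where
  "bp E = (LEAST m. \<exists>Ps. biclique_partition E Ps \<and> length Ps = m)"

definition induced_edges :: "'a set set \<Rightarrow> 'a set \<Rightarrow> 'a set set" where
  "induced_edges E S = {e \<in> E. e \<subseteq> S}"

definition special_subgraph :: "'a set \<Rightarrow> 'a set set \<Rightarrow> 'a set \<Rightarrow> nat \<Rightarrow> bool" where
  "special_subgraph V E S k \<longleftrightarrow> S \<subseteq> V \<and>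
     (\<exists>r::nat. card S = k + r \<and>
        (\<exists>Ps. biclique_partition (induced_edges E S) Ps \<and> length Ps \<le> r
              \<and> (\<forall>P\<in>set Ps. non_star P)))"

end

theory Submission
  imports Defs "HOL-Library.Disjoint_Sets"
begin

text \<open>
  Deleting the centre of a star occurring in a biclique partition of an induced subgraph removes
  one vertex and at least one biclique, and what remains of the other bicliques partitions the
  smaller induced subgraph. Starting from an optimal partition of \<open>G\<close> into \<open>m \<le> n - k\<close> bicliques
  and repeating this until no star is left yields a vertex set \<open>S\<close> whose induced subgraph is
  partitioned into \<open>r\<close> non-star bicliques with \<open>|S| - r \<ge> n - m \<ge> k\<close>.
  Conversely, starting from a special subgraph on \<open>k + r\<close> vertices with \<open>r\<close> non-star bicliques,
  adding the remaining \<open>n - k - r\<close> vertices one at a time costs one star each, so \<open>G\<close> is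
  partitioned into at most \<open>n - k\<close> bicliques.
\<close>

abbreviation bedges :: "'a set \<times> 'a set \<Rightarrow> 'a set set" where
  "bedges P \<equiv> biclique_edges (fst P) (snd P)"

definition biclique_decomposition :: "'a set set \<Rightarrow> ('a set \<times> 'a set) set \<Rightarrow> bool" where
  "biclique_decomposition F Ps \<longleftrightarrow> finite Ps \<and> (\<forall>P\<in>Ps. is_biclique F P)
     \<and> disjoint_family_on bedges Ps \<and> (\<Union>P\<in>Ps. bedges P) = F"

lemma mem_biclique_edges: "e \<in> biclique_edges A B \<longleftrightarrow> (\<exists>a\<in>A. \<exists>b\<in>B. e = {a, b})"
  unfolding biclique_edges_def by blast

lemma biclique_edges_Int:
  "biclique_edges (A \<inter> W) (B \<inter> W) = {e \<in> biclique_edges A B. e \<subseteq> W}"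
  unfolding biclique_edges_def by blast

lemma biclique_decomposition_set:
  assumes "biclique_partition F L"
  shows "biclique_decomposition F (set L)"
proof -
  have "disjoint_family_on bedges (set L)"
    unfolding disjoint_family_on_def
  proof (intro ballI impI)
    fix P Q assume "P \<in> set L" "Q \<in> set L" "P \<noteq> Q"
    then obtain i j where ij: "i < length L" "j < length L" "P = L ! i" "Q = L ! j"
      by (metis in_set_conv_nth)
    moreover have "i \<noteq> j"
      using ij \<open>P \<noteq> Q\<close> by blast
    ultimately show "bedges P \<inter> bedges Q = {}"
      using assms unfolding biclique_partition_def by blast
  qed
  then show ?thesis
    using assms unfolding biclique_partition_def biclique_decomposition_def by blast
qed

lemma biclique_partition_of_decomposition:
  assumes "biclique_decomposition F Ps"
  obtains L where "biclique_partition F L" "set L = Ps" "length L = card Ps"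
proof -
  have "finite Ps"
    using assms unfolding biclique_decomposition_def by blast
  then obtain L where L: "set L = Ps" "distinct L"
    using finite_distinct_list by blast
  have "bedges (L ! i) \<inter> bedges (L ! j) = {}"
    if "i < length L" "j < length L" "i \<noteq> j" for i j
  proof -
    have "L ! i \<noteq> L ! j" "L ! i \<in> Ps" "L ! j \<in> Ps"
      using that L nth_eq_iff_index_eq nth_mem by blast+
    then show ?thesis
      using assms unfolding biclique_decomposition_def disjoint_family_on_def by blast
  qed
  then have "biclique_partition F L"
    using assms L(1) unfolding biclique_partition_def biclique_decomposition_def by blast
  moreover have "length L = card Ps"
    using L distinct_card by fastforce
  ultimately show thesis
    using that L(1) by blast
qed

lemma bp_le_card:
  assumes "biclique_decomposition E Ps"
  shows "bp E \<le> card Ps"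
proof -
  obtain L where L: "biclique_partition E L" "length L = card Ps"
    using biclique_partition_of_decomposition[OF assms] by metis
  show ?thesis
    unfolding bp_def by (rule Least_le) (use L in blast)
qed

lemma bp_attained:
  assumes "biclique_decomposition E Ps0"
  obtains Ps where "biclique_decomposition E Ps" "card Ps = bp E"
proof -
  obtain L0 where L0: "biclique_partition E L0"
    using biclique_partition_of_decomposition[OF assms] by metis
  have "\<exists>L. biclique_partition E L \<and> length L = bp E"
    unfolding bp_def by (rule LeastI_ex) (use L0 in blast)
  then obtain L where L: "biclique_partition E L" "length L = bp E"
    by blast
  have dec: "biclique_decomposition E (set L)"
    using L(1) by (rule biclique_decomposition_set)
  moreover have "card (set L) = bp E"
    using bp_le_card[OF dec] card_length[of L] L(2) by linarith
  ultimately show thesis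
    using that by blast
qed

lemma is_biclique_induced_parts:
  assumes "is_biclique (induced_edges E S) P"
  shows "fst P \<subseteq> S" "snd P \<subseteq> S"
  using assms unfolding is_biclique_def induced_edges_def biclique_edges_def by blast+

subsection \<open>Restricting a decomposition to fewer vertices\<close>

definition restrict_bicliques :: "'a set \<Rightarrow> ('a set \<times> 'a set) set \<Rightarrow> ('a set \<times> 'a set) set" where
  "restrict_bicliques W Ps =
     {Q. (\<exists>P\<in>Ps. Q = (fst P \<inter> W, snd P \<inter> W)) \<and> fst Q \<noteq> {} \<and> snd Q \<noteq> {}}"

lemma finite_restrict_bicliques:
  assumes "finite Ps"
  shows "finite (restrict_bicliques W Ps)"
proof -
  have "restrict_bicliques W Ps \<subseteq> (\<lambda>P. (fst P \<inter> W, snd P \<inter> W)) ` Ps"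
    unfolding restrict_bicliques_def by blast
  then show ?thesis
    using assms by (meson finite_imageI finite_subset)
qed

lemma card_restrict_bicliques_less:
  assumes "finite Ps" "P \<in> Ps" "fst P \<inter> W = {} \<or> snd P \<inter> W = {}"
  shows "card (restrict_bicliques W Ps) < card Ps"
proof -
  have "restrict_bicliques W Ps \<subseteq> (\<lambda>P. (fst P \<inter> W, snd P \<inter> W)) ` (Ps - {P})"
    using assms(3) unfolding restrict_bicliques_def by fastforce
  then have "card (restrict_bicliques W Ps) \<le> card (Ps - {P})"
    using assms(1) card_image_le card_mono
    by (metis (no_types, lifting) finite_Diff finite_imageI le_trans)
  also have "\<dots> < card Ps"
    using assms(1,2) by (rule card_Diff1_less)
  finally show ?thesis .
qed

lemma bedges_restrict:
  "bedges (fst P \<inter> W, snd P \<inter> W) = {e \<in> bedges P. e \<subseteq> W}"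
  by (simp add: biclique_edges_Int)

lemma disjoint_family_on_restrict_bicliques:
  assumes "disjoint_family_on bedges Ps"
  shows "disjoint_family_on bedges (restrict_bicliques W Ps)"
  unfolding disjoint_family_on_def
proof (intro ballI impI)
  fix Q Q' assume "Q \<in> restrict_bicliques W Ps" "Q' \<in> restrict_bicliques W Ps" "Q \<noteq> Q'"
  then obtain P P' where PP': "P \<in> Ps" "P' \<in> Ps" "P \<noteq> P'"
    "Q = (fst P \<inter> W, snd P \<inter> W)" "Q' = (fst P' \<inter> W, snd P' \<inter> W)"
    unfolding restrict_bicliques_def by blast
  have "bedges P \<inter> bedges P' = {}"
    using assms PP'(1-3) by (rule disjoint_family_onD)
  then show "bedges Q \<inter> bedges Q' = {}"
    unfolding PP'(4,5) bedges_restrict by blast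
qed

lemma UN_bedges_restrict_bicliques:
  "(\<Union>Q\<in>restrict_bicliques W Ps. bedges Q) = {e \<in> (\<Union>P\<in>Ps. bedges P). e \<subseteq> W}"
proof
  show "(\<Union>Q\<in>restrict_bicliques W Ps. bedges Q) \<subseteq> {e \<in> (\<Union>P\<in>Ps. bedges P). e \<subseteq> W}"
  proof
    fix e assume "e \<in> (\<Union>Q\<in>restrict_bicliques W Ps. bedges Q)"
    then obtain P where "P \<in> Ps" "e \<in> bedges (fst P \<inter> W, snd P \<inter> W)"
      unfolding restrict_bicliques_def by blast
    then show "e \<in> {e \<in> (\<Union>P\<in>Ps. bedges P). e \<subseteq> W}"
      unfolding bedges_restrict by blast
  qed
next
  show "{e \<in> (\<Union>P\<in>Ps. bedges P). e \<subseteq> W} \<subseteq> (\<Union>Q\<in>restrict_bicliques W Ps. bedges Q)"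
  proof
    fix e assume "e \<in> {e \<in> (\<Union>P\<in>Ps. bedges P). e \<subseteq> W}"
    then obtain P where P: "P \<in> Ps" "e \<in> bedges (fst P \<inter> W, snd P \<inter> W)"
      unfolding bedges_restrict by blast
    then have "fst P \<inter> W \<noteq> {}" "snd P \<inter> W \<noteq> {}"
      unfolding mem_biclique_edges by auto
    then have "(fst P \<inter> W, snd P \<inter> W) \<in> restrict_bicliques W Ps"
      using P(1) unfolding restrict_bicliques_def by auto
    then show "e \<in> (\<Union>Q\<in>restrict_bicliques W Ps. bedges Q)"
      using P(2) by blast
  qed
qed

lemma biclique_decomposition_restrict:
  assumes dec: "biclique_decomposition (induced_edges E S) Ps" and "W \<subseteq> S"
  shows "biclique_decomposition (induced_edges E W) (restrict_bicliques W Ps)"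
proof -
  have ind: "induced_edges E W = {e \<in> induced_edges E S. e \<subseteq> W}"
    using \<open>W \<subseteq> S\<close> unfolding induced_edges_def by blast
  have fin: "finite Ps"
    and bic: "\<forall>P\<in>Ps. is_biclique (induced_edges E S) P"
    and disj: "disjoint_family_on bedges Ps"
    and cover: "(\<Union>P\<in>Ps. bedges P) = induced_edges E S"
    using dec unfolding biclique_decomposition_def by blast+
  have "is_biclique (induced_edges E W) Q" if Q: "Q \<in> restrict_bicliques W Ps" for Q
  proof -
    obtain P where P: "P \<in> Ps" "Q = (fst P \<inter> W, snd P \<inter> W)" "fst Q \<noteq> {}" "snd Q \<noteq> {}"
      using Q unfolding restrict_bicliques_def by blast
    then have "bedges Q \<subseteq> induced_edges E W"
      using bic bedges_restrict unfolding ind is_biclique_def by blast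
    moreover have "fst Q \<inter> snd Q = {}"
      using bic P(1,2) unfolding is_biclique_def by auto
    ultimately show ?thesis
      using P(3,4) unfolding is_biclique_def by blast
  qed
  moreover have "(\<Union>Q\<in>restrict_bicliques W Ps. bedges Q) = induced_edges E W"
    unfolding UN_bedges_restrict_bicliques cover ind ..
  ultimately show ?thesis
    using finite_restrict_bicliques[OF fin] disjoint_family_on_restrict_bicliques[OF disj]
    unfolding biclique_decomposition_def by blast
qed

subsection \<open>Eliminating stars\<close>

lemma star_has_singleton_part:
  assumes "finite (fst P)" "finite (snd P)" "fst P \<noteq> {}" "snd P \<noteq> {}" "\<not> non_star P"
  obtains c where "fst P = {c} \<or> snd P = {c}"
proof -
  have "0 < card (fst P)" "0 < card (snd P)"
    using assms(1-4) by (simp_all add: card_gt_0_iff)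
  then have "card (fst P) = 1 \<or> card (snd P) = 1"
    using assms(5) unfolding non_star_def by linarith
  then show thesis
    using that by (metis card_1_singletonE)
qed

lemma non_star_decomposition_exists:
  assumes "finite S" "biclique_decomposition (induced_edges E S) Ps"
  obtains S' Q where "S' \<subseteq> S" "biclique_decomposition (induced_edges E S') Q"
    "\<forall>P\<in>Q. non_star P" "card Q + card S \<le> card S' + card Ps"
  using assms
proof (induction "card Ps" arbitrary: S Ps thesis rule: less_induct)
  case less
  show thesis
  proof (cases "\<forall>P\<in>Ps. non_star P")
    case True
    show thesis
      by (rule less.prems(1)[OF subset_refl less.prems(3) True]) simp
  next
    case False
    then obtain P where P: "P \<in> Ps" "\<not> non_star P"
      by blast
    have finPs: "finite Ps" and bic: "is_biclique (induced_edges E S) P"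
      using less.prems(3) P(1) unfolding biclique_decomposition_def by blast+
    note parts = is_biclique_induced_parts[OF bic]
    obtain c where c: "fst P = {c} \<or> snd P = {c}"
      using star_has_singleton_part[OF _ _ _ _ P(2)] parts less.prems(2) bic
      unfolding is_biclique_def by (meson finite_subset)
    define W where "W = S - {c}"
    have "c \<in> S"
      using c parts by blast
    then have cardW: "card W + 1 = card S"
      using less.prems(2) unfolding W_def by (metis Suc_eq_plus1 card_Suc_Diff1)
    have decW: "biclique_decomposition (induced_edges E W) (restrict_bicliques W Ps)"
      using less.prems(3) unfolding W_def by (rule biclique_decomposition_restrict) blast
    have less_card: "card (restrict_bicliques W Ps) < card Ps"
      using finPs P(1) c unfolding W_def by (intro card_restrict_bicliques_less) auto
    have "finite W"
      using less.prems(2) unfolding W_def by blast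
    obtain S' Q where S': "S' \<subseteq> W" "biclique_decomposition (induced_edges E S') Q"
      "\<forall>P\<in>Q. non_star P" "card Q + card W \<le> card S' + card (restrict_bicliques W Ps)"
      using less.hyps[OF less_card _ \<open>finite W\<close> decW] by blast
    have "S' \<subseteq> S"
      using S'(1) unfolding W_def by blast
    moreover have "card Q + card S \<le> card S' + card Ps"
      using S'(4) cardW less_card by linarith
    ultimately show thesis
      using less.prems(1) S'(2,3) by blast
  qed
qed

subsection \<open>Adding vertices one star at a time\<close>

lemma induced_edges_insert:
  assumes "\<forall>e\<in>E. card e = 2"
  shows "induced_edges E (insert x S) = induced_edges E S \<union> biclique_edges {x} {y \<in> S. {x, y} \<in> E}"
proof
  show "induced_edges E (insert x S) \<subseteq> induced_edges E S \<union> biclique_edges {x} {y \<in> S. {x, y} \<in> E}"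
  proof
    fix e assume e: "e \<in> induced_edges E (insert x S)"
    show "e \<in> induced_edges E S \<union> biclique_edges {x} {y \<in> S. {x, y} \<in> E}"
    proof (cases "x \<in> e")
      case False
      then show ?thesis
        using e unfolding induced_edges_def by blast
    next
      case True
      have "card e = 2"
        using assms e unfolding induced_edges_def by blast
      then obtain y where y: "e = {x, y}" "y \<noteq> x"
        using True unfolding card_2_iff by blast
      then have "y \<in> S" "{x, y} \<in> E"
        using e unfolding induced_edges_def by auto
      then have "e \<in> biclique_edges {x} {y \<in> S. {x, y} \<in> E}"
        unfolding y(1) biclique_edges_def by blast
      then show ?thesis
        by blast
    qed
  qed
next
  show "induced_edges E S \<union> biclique_edges {x} {y \<in> S. {x, y} \<in> E} \<subseteq> induced_edges E (insert x S)"
    unfolding induced_edges_def biclique_edges_def by blast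
qed

lemma is_biclique_mono:
  assumes "F \<subseteq> F'" "is_biclique F P"
  shows "is_biclique F' P"
  using assms unfolding is_biclique_def by blast

lemma biclique_decomposition_insert_biclique:
  assumes dec: "biclique_decomposition F Ps"
    and bic: "is_biclique (F \<union> bedges P) P" and disj: "bedges P \<inter> F = {}"
  shows "biclique_decomposition (F \<union> bedges P) (insert P Ps)"
proof -
  have fin: "finite Ps"
    and bics: "\<forall>Q\<in>Ps. is_biclique F Q"
    and disj_Ps: "disjoint_family_on bedges Ps"
    and cover: "(\<Union>Q\<in>Ps. bedges Q) = F"
    using dec unfolding biclique_decomposition_def by blast+
  have "fst P \<noteq> {}" "snd P \<noteq> {}"
    using bic unfolding is_biclique_def by blast+
  then have "bedges P \<noteq> {}"
    unfolding biclique_edges_def by blast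
  then have "P \<notin> Ps"
    using cover disj by blast
  then have "disjoint_family_on bedges (insert P Ps)"
    by (simp add: disjoint_family_on_insert cover disj disj_Ps)
  moreover have "\<forall>Q\<in>insert P Ps. is_biclique (F \<union> bedges P) Q"
    using bic bics is_biclique_mono[of F "F \<union> bedges P"] by blast
  moreover have "(\<Union>Q\<in>insert P Ps. bedges Q) = F \<union> bedges P"
    by (simp add: cover Un_commute)
  ultimately show ?thesis
    using fin unfolding biclique_decomposition_def by blast
qed

lemma biclique_decomposition_insert:
  assumes card2: "\<forall>e\<in>E. card e = 2" and dec: "biclique_decomposition (induced_edges E S) Ps"
  obtains Ps' where "biclique_decomposition (induced_edges E (insert x S)) Ps'" "card Ps' \<le> card Ps + 1"
proof -
  define N where "N = {y \<in> S. {x, y} \<in> E}"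
  have ins: "induced_edges E (insert x S) = induced_edges E S \<union> bedges ({x}, N)"
    unfolding N_def using induced_edges_insert[OF card2] by simp
  show thesis
  proof (cases "x \<in> S \<or> N = {}")
    case True
    then have "induced_edges E (insert x S) = induced_edges E S"
      using ins by (auto simp: insert_absorb biclique_edges_def)
    then show thesis
      using that dec by simp
  next
    case False
    have star: "is_biclique (induced_edges E (insert x S)) ({x}, N)"
      using False unfolding is_biclique_def ins N_def by auto
    have "x \<notin> e" if "e \<in> induced_edges E S" for e
      using that False unfolding induced_edges_def by blast
    moreover have "x \<in> e" if "e \<in> bedges ({x}, N)" for e
      using that unfolding mem_biclique_edges by auto
    ultimately have "bedges ({x}, N) \<inter> induced_edges E S = {}"
      by blast
    then have "biclique_decomposition (induced_edges E (insert x S)) (insert ({x}, N) Ps)"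
      using biclique_decomposition_insert_biclique[OF dec] star unfolding ins by blast
    moreover have "card (insert ({x}, N) Ps) \<le> card Ps + 1"
      using dec unfolding biclique_decomposition_def by (simp add: card_insert_if)
    ultimately show thesis
      using that by blast
  qed
qed

lemma biclique_decomposition_union:
  assumes card2: "\<forall>e\<in>E. card e = 2" and "finite T"
    and "biclique_decomposition (induced_edges E S) Ps"
  obtains Ps' where "biclique_decomposition (induced_edges E (S \<union> T)) Ps'"
    "card Ps' \<le> card Ps + card T"
  using \<open>finite T\<close> that
proof (induction T arbitrary: thesis rule: finite_induct)
  case empty
  then show ?case
    using assms(3) by simp
next
  case (insert x T)
  obtain Ps' where Ps': "biclique_decomposition (induced_edges E (S \<union> T)) Ps'"
    "card Ps' \<le> card Ps + card T"
    using insert.IH by blast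
  obtain Ps'' where "biclique_decomposition (induced_edges E (insert x (S \<union> T))) Ps''"
    "card Ps'' \<le> card Ps' + 1"
    using biclique_decomposition_insert[OF card2 Ps'(1)] by blast
  then show ?case
    using insert.prems insert.hyps Ps'(2) by simp
qed

lemma induced_edges_empty:
  assumes "\<forall>e\<in>E. card e = 2"
  shows "induced_edges E {} = {}"
  using assms unfolding induced_edges_def by fastforce

lemma graph_induced_edges_self:
  assumes "graph V E"
  shows "induced_edges E V = E"
  using assms unfolding graph_def induced_edges_def by blast

lemma biclique_decomposition_exists:
  assumes "graph V E"
  obtains Ps where "biclique_decomposition E Ps"
proof -
  have card2: "\<forall>e\<in>E. card e = 2" and "finite V"
    using assms unfolding graph_def by blast+
  have "biclique_decomposition (induced_edges E {}) {}"
    unfolding induced_edges_empty[OF card2] biclique_decomposition_def disjoint_family_on_def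
    by simp
  then obtain Ps where "biclique_decomposition (induced_edges E ({} \<union> V)) Ps"
    using biclique_decomposition_union[OF card2 \<open>finite V\<close>] by blast
  then show thesis
    using that graph_induced_edges_self[OF assms] by simp
qed

lemma special_subgraph_iff_decomposition:
  "special_subgraph V E S k \<longleftrightarrow> S \<subseteq> V \<and>
     (\<exists>Q. biclique_decomposition (induced_edges E S) Q \<and> (\<forall>P\<in>Q. non_star P) \<and> k + card Q \<le> card S)"
proof
  assume "special_subgraph V E S k"
  then obtain r L where "S \<subseteq> V" "card S = k + r" "biclique_partition (induced_edges E S) L"
    "length L \<le> r" "\<forall>P\<in>set L. non_star P"
    unfolding special_subgraph_def by blast
  moreover have "k + card (set L) \<le> card S"
    using calculation(2,4) card_length[of L] by linarith
  ultimately show "S \<subseteq> V \<and>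
     (\<exists>Q. biclique_decomposition (induced_edges E S) Q \<and> (\<forall>P\<in>Q. non_star P) \<and> k + card Q \<le> card S)"
    using biclique_decomposition_set by blast
next
  assume "S \<subseteq> V \<and>
     (\<exists>Q. biclique_decomposition (induced_edges E S) Q \<and> (\<forall>P\<in>Q. non_star P) \<and> k + card Q \<le> card S)"
  then obtain Q where Q: "S \<subseteq> V" "biclique_decomposition (induced_edges E S) Q"
    "\<forall>P\<in>Q. non_star P" "k + card Q \<le> card S"
    by blast
  obtain L where "biclique_partition (induced_edges E S) L" "set L = Q" "length L = card Q"
    using biclique_partition_of_decomposition[OF Q(2)] by blast
  then show "special_subgraph V E S k"
    unfolding special_subgraph_def using Q(1,3,4)
    by (intro conjI exI[of _ "card S - k"] exI[of _ L]) auto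
qed

lemma special_subgraph_if_bp_le:
  assumes "graph V E" and "bp E + k \<le> card V"
  obtains S where "special_subgraph V E S k"
proof -
  have "finite V"
    using assms(1) unfolding graph_def by blast
  obtain Ps0 where "biclique_decomposition E Ps0"
    using biclique_decomposition_exists[OF assms(1)] .
  then obtain Ps where "biclique_decomposition (induced_edges E V) Ps" "card Ps = bp E"
    using bp_attained graph_induced_edges_self[OF assms(1)] by metis
  then obtain S Q where "S \<subseteq> V" "biclique_decomposition (induced_edges E S) Q"
    "\<forall>P\<in>Q. non_star P" "card Q + card V \<le> card S + card Ps"
    using non_star_decomposition_exists[OF \<open>finite V\<close>] by blast
  moreover have "k + card Q \<le> card S"
    using calculation(4) \<open>card Ps = bp E\<close> assms(2) by linarith
  ultimately show thesis
    using that unfolding special_subgraph_iff_decomposition by blast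
qed

lemma bp_le_if_special_subgraph:
  assumes "graph V E" and "special_subgraph V E S k"
  shows "bp E + k \<le> card V"
proof -
  have card2: "\<forall>e\<in>E. card e = 2" and "finite V"
    using assms(1) unfolding graph_def by blast+
  obtain Q where S: "S \<subseteq> V" "biclique_decomposition (induced_edges E S) Q" "k + card Q \<le> card S"
    using assms(2) unfolding special_subgraph_iff_decomposition by blast
  have "finite (V - S)"
    using \<open>finite V\<close> by blast
  then obtain Ps where "biclique_decomposition (induced_edges E (S \<union> (V - S))) Ps"
    "card Ps \<le> card Q + card (V - S)"
    using biclique_decomposition_union[OF card2 _ S(2)] by blast
  moreover have "S \<union> (V - S) = V"
    using S(1) by blast
  ultimately have "bp E \<le> card Q + card (V - S)"
    using bp_le_card graph_induced_edges_self[OF assms(1)] by fastforce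
  moreover have "card (V - S) + card S = card V"
    using S(1) \<open>finite V\<close> by (simp add: card_Diff_subset finite_subset card_mono)
  ultimately show ?thesis
    using S(3) by linarith
qed

theorem mainTheorem2:
  fixes V :: "'a set" and E :: "'a set set" and n k :: nat
  assumes "graph V E" and "card V = n" and "2 \<le> k" and "k \<le> n"
  shows "bp E \<le> n - k \<longleftrightarrow> (\<exists>S. special_subgraph V E S k)"
proof
  assume "bp E \<le> n - k"
  then have "bp E + k \<le> card V"
    using assms(2,4) by linarith
  then show "\<exists>S. special_subgraph V E S k"
    using special_subgraph_if_bp_le[OF assms(1)] by metis
next
  assume "\<exists>S. special_subgraph V E S k"
  then have "bp E + k \<le> card V"
    using bp_le_if_special_subgraph[OF assms(1)] by blast
  then show "bp E \<le> n - k"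
    using assms(2) by linarith
qed

end
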